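(* Let $\mathcal{F}=\{f_1,\dots,f_M\}$ be a frame of $\mathbb{R}^N$ partitioned into $K$ disjoint pools indexed by $I_1,\dots,I_K$ (disjoint, union $\{1,\dots,M\}$), each of size $|I_k|=L$. Let $P_\infty(x)=\big(\max_{j\in I_k}|\langle x,f_j\rangle|\big)_{k=1}^K$ be the max-pooling operator. Then for all $x,x'\in\mathbb{R}^N$, $$d(x,x')\Big(\min_{s,s'\in\mathcal{S}}A(s,s')\Big)\le\|P_\infty(x)-P_\infty(x')\|_2,$$ where $d(x,x')=\min(\|x-x'\|,\|x+x'\|)$ and, for $s,s'\in\mathcal{S}$ with $\mathcal{J}=\mathcal{J}(s,s')$, $$A(s,s')=\Big\{\min_{\Omega\subseteq\mathcal{J}}\big(\lambda_-^2(\mathcal{F}_{s,\Omega})+\lambda_-^2(\mathcal{F}_{s,\mathcal{J}\setminus\Omega})\big)+\frac{1}{4L}\min_{\Omega\subseteq\mathcal{J}^c}\big(\Lambda_{s,s',\Omega}^2+\Lambda_{s,s',\mathcal{J}^c\setminus\Omega}^2\big)\Big\}^{1/2}.$$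
   Context: Frame bounds: for a finite family $G=\{g_i\}\subset\mathbb{R}^N$, $\lambda_-(G)=\inf_{\|x\|=1}(\sum_i\langle x,g_i\rangle^2)^{1/2}$, $\lambda_+(G)=\sup_{\|x\|=1}(\sum_i\langle x,g_i\rangle^2)^{1/2}$, with $\lambda_-(\emptyset)=0$. Switches: for $x\in\mathbb{R}^N$, $s(x)\in\prod_k I_k$ is given by $s(x)_k=\arg\max_{j\in I_k}|\langle x,f_j\rangle|$, and $\mathcal{S}=\{s(x):x\in\mathbb{R}^N\}$. For $s\in\mathcal{S}$, the cone $\mathcal{C}_s=\bigcap_{k\le K}\bigcap_{j\in I_k}\{x:|\langle x,f_{s_k}\rangle|\ge|\langle x,f_j\rangle|\}$. For $s\in\mathcal{S}$ and $\Omega\subseteq\{1,\dots,K\}$, $\mathcal{F}_{s,\Omega}=(f_{s_k})_{k\in\Omega}$ and $\mathcal{F}_s|_\Omega$ is the linear map $x\mapsto(\langle x,f_{s_k}\rangle)_{k\in\Omega}\in\mathbb{R}^{|\Omega|}$; $\mathcal{F}|_\Omega$ denotes the family $\{f_j: j\in\bigcup_{k\in\Omega}I_k\}$ of all vectors in the pools indexed by $\Omega$. For nonzero vectors $u,v$, $\theta(u,v)=\arccos\big(|\langle u,v\rangle|/(\|u\|\|v\|)\big)$. For $s,s'\in\mathcal{S}$ and $\Omega\subseteq\{1,\dots,K\}$, $\beta(s,s',\Omega)=\min\{\theta(u,v): u\in\mathcal{F}_s|_\Omega(\mathcal{C}_s),\ v\in\mathcal{F}_{s'}|_\Omega(\mathcal{C}_{s'})\}$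 (a modified first principal angle restricted to the images of the cones), and $\Lambda_{s,s',\Omega}=\lambda_-(\mathcal{F}|_\Omega)\sin(\beta(s,s',\Omega))$. Finally $\mathcal{J}(s,s')=\{k: s_k=s'_k\}$ and $\mathcal{J}^c=\{1,\dots,K\}\setminus\mathcal{J}$. *)

theory Defs
  imports "HOL-Analysis.Analysis"
begin

definition lambda_minus :: "('i \<Rightarrow> 'a::euclidean_space) \<Rightarrow> 'i set \<Rightarrow> real" where
  "lambda_minus g A = (INF x\<in>{x::'a. norm x = 1}. sqrt (\<Sum>i\<in>A. (x \<bullet> g i)^2))"

definition Pinf :: "(nat \<Rightarrow> 'a::euclidean_space) \<Rightarrow> (nat \<Rightarrow> nat set) \<Rightarrow> 'a \<Rightarrow> nat \<Rightarrow> real" where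
  "Pinf f I x k = Max ((\<lambda>j. \<bar>x \<bullet> f j\<bar>) ` I k)"

definition pool_dist :: "(nat \<Rightarrow> 'a::euclidean_space) \<Rightarrow> (nat \<Rightarrow> nat set) \<Rightarrow> nat \<Rightarrow> 'a \<Rightarrow> 'a \<Rightarrow> real" where
  "pool_dist f I K x x' = sqrt (\<Sum>k\<in>{1..K}. (Pinf f I x k - Pinf f I x' k)^2)"

definition dpm :: "'a::real_normed_vector \<Rightarrow> 'a \<Rightarrow> real" where
  "dpm x x' = min (norm (x - x')) (norm (x + x'))"

definition cone_s :: "(nat \<Rightarrow> 'a::euclidean_space) \<Rightarrow> (nat \<Rightarrow> nat set) \<Rightarrow> nat \<Rightarrow> (nat \<Rightarrow> nat) \<Rightarrow> 'a set" where
  "cone_s f I K s = {x. \<forall>k\<in>{1..K}. \<forall>j\<in>I k. \<bar>x \<bullet> f j\<bar> \<le> \<bar>x \<bullet> f (s k)\<bar>}"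

text \<open>The map F_s restricted to Omega, x |-> (<x, f_{s_k}>)_{k in Omega}; vectors of
  R^|Omega| are represented as functions on Omega (values off Omega are irrelevant).\<close>
definition Fs_map :: "(nat \<Rightarrow> 'a::euclidean_space) \<Rightarrow> (nat \<Rightarrow> nat) \<Rightarrow> 'a \<Rightarrow> nat \<Rightarrow> real" where
  "Fs_map f s x = (\<lambda>k. x \<bullet> f (s k))"

definition inner_on :: "nat set \<Rightarrow> (nat \<Rightarrow> real) \<Rightarrow> (nat \<Rightarrow> real) \<Rightarrow> real" where
  "inner_on \<Omega> u v = (\<Sum>k\<in>\<Omega>. u k * v k)"

definition norm_on :: "nat set \<Rightarrow> (nat \<Rightarrow> real) \<Rightarrow> real" where
  "norm_on \<Omega> u = sqrt (inner_on \<Omega> u u)"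

definition theta_on :: "nat set \<Rightarrow> (nat \<Rightarrow> real) \<Rightarrow> (nat \<Rightarrow> real) \<Rightarrow> real" where
  "theta_on \<Omega> u v = arccos (\<bar>inner_on \<Omega> u v\<bar> / (norm_on \<Omega> u * norm_on \<Omega> v))"

text \<open>Modified first principal angle beta(s,s',Omega): min over nonzero u in F_s|Omega(C_s),
  nonzero v in F_s'|Omega(C_s'). Convention: 0 if there is no such pair (degenerate case).\<close>
definition beta_angle :: "(nat \<Rightarrow> 'a::euclidean_space) \<Rightarrow> (nat \<Rightarrow> nat set) \<Rightarrow> nat \<Rightarrow>
    (nat \<Rightarrow> nat) \<Rightarrow> (nat \<Rightarrow> nat) \<Rightarrow> nat set \<Rightarrow> real" where
  "beta_angle f I K s s' \<Omega> =
     (let T = {theta_on \<Omega> u v | u v.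
                 u \<in> Fs_map f s ` cone_s f I K s \<and> v \<in> Fs_map f s' ` cone_s f I K s' \<and>
                 norm_on \<Omega> u \<noteq> 0 \<and> norm_on \<Omega> v \<noteq> 0}
      in if T = {} then 0 else Inf T)"

definition Lambda_ss :: "(nat \<Rightarrow> 'a::euclidean_space) \<Rightarrow> (nat \<Rightarrow> nat set) \<Rightarrow> nat \<Rightarrow>
    (nat \<Rightarrow> nat) \<Rightarrow> (nat \<Rightarrow> nat) \<Rightarrow> nat set \<Rightarrow> real" where
  "Lambda_ss f I K s s' \<Omega> = lambda_minus f (\<Union>k\<in>\<Omega>. I k) * sin (beta_angle f I K s s' \<Omega>)"

definition Jset :: "nat \<Rightarrow> (nat \<Rightarrow> nat) \<Rightarrow> (nat \<Rightarrow> nat) \<Rightarrow> nat set" where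
  "Jset K s s' = {k\<in>{1..K}. s k = s' k}"

definition Jcset :: "nat \<Rightarrow> (nat \<Rightarrow> nat) \<Rightarrow> (nat \<Rightarrow> nat) \<Rightarrow> nat set" where
  "Jcset K s s' = {1..K} - Jset K s s'"

definition A_bound :: "(nat \<Rightarrow> 'a::euclidean_space) \<Rightarrow> (nat \<Rightarrow> nat set) \<Rightarrow> nat \<Rightarrow> nat \<Rightarrow>
    (nat \<Rightarrow> nat) \<Rightarrow> (nat \<Rightarrow> nat) \<Rightarrow> real" where
  "A_bound f I K L s s' =
     (let J = Jset K s s'; Jc = Jcset K s s' in
      sqrt (Min ((\<lambda>\<Omega>. (lambda_minus (\<lambda>k. f (s k)) \<Omega>)^2
                        + (lambda_minus (\<lambda>k. f (s k)) (J - \<Omega>))^2) ` Pow J)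
            + 1 / (4 * real L) *
              Min ((\<lambda>\<Omega>. (Lambda_ss f I K s s' \<Omega>)^2 + (Lambda_ss f I K s s' (Jc - \<Omega>))^2) ` Pow Jc)))"

end

theory Submission
  imports Defs
begin

text \<open>Fix x in the cone of its switch s and x' in the cone of s', so that the pooled
  coordinates are |<x, f_{s_k}>| and |<x', f_{s'_k}>|, and the k-th squared difference is
  the smaller of (<x, f_{s_k}> \<mp> <x', f_{s'_k}>)^2. Splitting the pools by which sign
  attains the minimum turns each half into a sum over a subset \<Omega>.
  On pools where the switches agree these are sums of (<x \<mp> x', f_{s_k}>)^2, bounded below
  by the lower frame bound times d(x,x')^2. On pools where they differ, the vectors of
  coefficients lie in the images of the two cones, so their squared distance is at least
  sin^2 \<beta> times the larger of their squared norms; the maximum over a pool of size L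
  controls the whole pool, giving L times that norm at least \<lambda>_-^2 |x|^2, and
  d(x,x') \<le> 2 max(|x|, |x'|) produces the factor 1/(4L).\<close>

lemma lambda_minus_nonneg: "0 \<le> lambda_minus (g::'i \<Rightarrow> 'a::euclidean_space) A"
proof -
  obtain b :: 'a where "b \<in> Basis" using nonempty_Basis by blast
  then have "{x::'a. norm x = 1} \<noteq> {}" by (auto intro!: exI[of _ b])
  then show ?thesis
    unfolding lambda_minus_def by (rule cINF_greatest) (simp add: sum_nonneg)
qed

lemma lambda_minus_sq_mult_norm_le:
  fixes g :: "'i \<Rightarrow> 'a::euclidean_space"
  shows "(lambda_minus g A)^2 * (norm y)^2 \<le> (\<Sum>i\<in>A. (y \<bullet> g i)^2)"
proof (cases "y = 0")
  case True then show ?thesis by (simp add: sum_nonneg)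
next
  case False
  define z where "z = y /\<^sub>R norm y"
  have "norm z = 1" using False by (simp add: z_def)
  then have "lambda_minus g A \<le> sqrt (\<Sum>i\<in>A. (z \<bullet> g i)^2)"
    unfolding lambda_minus_def
    by (intro cINF_lower) (auto simp: bdd_below_def sum_nonneg intro!: exI[of _ 0])
  also have "(\<Sum>i\<in>A. (z \<bullet> g i)^2) = (\<Sum>i\<in>A. (y \<bullet> g i)^2) / (norm y)^2"
    by (simp add: z_def sum_divide_distrib power_mult_distrib field_simps)
  finally have "lambda_minus g A \<le> sqrt (\<Sum>i\<in>A. (y \<bullet> g i)^2) / norm y"
    by (simp add: real_sqrt_divide)
  then have "(lambda_minus g A)^2 \<le> (sqrt (\<Sum>i\<in>A. (y \<bullet> g i)^2) / norm y)^2"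
    using lambda_minus_nonneg by (intro power_mono) auto
  also have "\<dots> = (\<Sum>i\<in>A. (y \<bullet> g i)^2) / (norm y)^2"
    by (simp add: power_divide sum_nonneg)
  finally show ?thesis using False by (simp add: field_simps)
qed

lemma dpm_nonneg: "0 \<le> dpm x y"
  by (simp add: dpm_def)

lemma dpm_minus_right: "dpm x (-y) = dpm x y"
  by (simp add: dpm_def min.commute)

lemma dpm_le_norm_diff: "dpm x y \<le> norm (x - y)"
  by (simp add: dpm_def)

lemma cone_s_uminus: "y \<in> cone_s f I K s \<Longrightarrow> -y \<in> cone_s f I K s"
  by (simp add: cone_s_def)

lemma lambda_minus_sq_mult_dpm_le:
  fixes f :: "nat \<Rightarrow> 'a::euclidean_space"
  assumes "\<And>k. k \<in> \<Omega> \<Longrightarrow> s' k = s k"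
  shows "(lambda_minus (\<lambda>k. f (s k)) \<Omega>)^2 * (dpm x y)^2 \<le> (\<Sum>k\<in>\<Omega>. (x \<bullet> f (s k) - y \<bullet> f (s' k))^2)"
proof -
  have "(dpm x y)^2 \<le> (norm (x - y))^2"
    using dpm_le_norm_diff dpm_nonneg by (intro power_mono)
  then have "(lambda_minus (\<lambda>k. f (s k)) \<Omega>)^2 * (dpm x y)^2
      \<le> (lambda_minus (\<lambda>k. f (s k)) \<Omega>)^2 * (norm (x - y))^2"
    by (intro mult_left_mono) auto
  also have "\<dots> \<le> (\<Sum>k\<in>\<Omega>. ((x - y) \<bullet> f (s k))^2)"
    by (rule lambda_minus_sq_mult_norm_le)
  also have "\<dots> = (\<Sum>k\<in>\<Omega>. (x \<bullet> f (s k) - y \<bullet> f (s' k))^2)"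
    using assms by (intro sum.cong) (auto simp: inner_diff_left)
  finally show ?thesis .
qed

lemma power2_abs_diff_abs: "(\<bar>a\<bar> - \<bar>b\<bar>)^2 = min ((a - b)^2) ((a + b)^2)" for a b :: real
  by (cases "a \<ge> 0"; cases "b \<ge> 0")
    (auto simp: min_def power2_eq_square algebra_simps mult_nonneg_nonpos
      mult_nonpos_nonneg zero_le_mult_iff)

lemma inner_on_nonneg: "0 \<le> inner_on \<Omega> u u"
  by (simp add: inner_on_def sum_nonneg)

lemma inner_on_Cauchy_Schwarz: "(inner_on \<Omega> u v)^2 \<le> inner_on \<Omega> u u * inner_on \<Omega> v v"
  unfolding inner_on_def using Cauchy_Schwarz_ineq_sum[of u v \<Omega>] by (simp add: power2_eq_square)

lemma sum_power2_diff_inner_on: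
  "(\<Sum>k\<in>\<Omega>. (u k - v k)^2) = inner_on \<Omega> u u + inner_on \<Omega> v v - 2 * inner_on \<Omega> u v"
proof -
  have "(\<Sum>k\<in>\<Omega>. (u k - v k)^2) = (\<Sum>k\<in>\<Omega>. u k * u k + v k * v k - 2 * (u k * v k))"
    by (rule sum.cong) (auto simp: power2_eq_square algebra_simps)
  then show ?thesis by (simp add: inner_on_def sum.distrib sum_subtractf sum_distrib_left)
qed

lemma theta_on_bounds_sin:
  assumes "norm_on \<Omega> u \<noteq> 0" "norm_on \<Omega> v \<noteq> 0"
  shows "0 \<le> theta_on \<Omega> u v" "theta_on \<Omega> u v \<le> pi/2"
    "(sin (theta_on \<Omega> u v))^2
       = 1 - (inner_on \<Omega> u v)^2 / (inner_on \<Omega> u u * inner_on \<Omega> v v)"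
proof -
  let ?p = "inner_on \<Omega> u v" and ?a = "inner_on \<Omega> u u" and ?b = "inner_on \<Omega> v v"
  have pos: "?a > 0" "?b > 0"
    using assms inner_on_nonneg[of \<Omega> u] inner_on_nonneg[of \<Omega> v]
    by (auto simp: norm_on_def)
  define c where "c = \<bar>?p\<bar> / (sqrt ?a * sqrt ?b)"
  have c2: "c^2 = ?p^2 / (?a * ?b)"
    using pos by (simp add: c_def power_divide power_mult_distrib)
  have c0: "0 \<le> c" using pos by (simp add: c_def)
  have "c^2 \<le> 1" using c2 inner_on_Cauchy_Schwarz[of \<Omega> u v] pos by simp
  then have c1: "c \<le> 1" using c0 by (simp add: power_le_one_iff)
  have th: "theta_on \<Omega> u v = arccos c" by (simp add: theta_on_def norm_on_def c_def)
  show "0 \<le> theta_on \<Omega> u v" using c0 c1 by (simp add: th arccos_lbound)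
  show "theta_on \<Omega> u v \<le> pi/2" using c0 c1 arccos_le_pi2[of c] by (simp add: th)
  show "(sin (theta_on \<Omega> u v))^2 = 1 - ?p^2 / (?a * ?b)"
    using c0 c1 c2 inner_on_Cauchy_Schwarz[of \<Omega> u v] pos by (simp add: th sin_arccos)
qed

lemma beta_angle_bounds:
  assumes "u \<in> Fs_map f s ` cone_s f I K s" "v \<in> Fs_map f s' ` cone_s f I K s'"
    and nz: "norm_on \<Omega> u \<noteq> 0" "norm_on \<Omega> v \<noteq> 0"
  shows "0 \<le> beta_angle f I K s s' \<Omega>" "beta_angle f I K s s' \<Omega> \<le> theta_on \<Omega> u v"
proof -
  define T where "T = {theta_on \<Omega> u v | u v.
                 u \<in> Fs_map f s ` cone_s f I K s \<and> v \<in> Fs_map f s' ` cone_s f I K s' \<and>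
                 norm_on \<Omega> u \<noteq> 0 \<and> norm_on \<Omega> v \<noteq> 0}"
  have uv: "theta_on \<Omega> u v \<in> T" unfolding T_def using assms by blast
  have T0: "\<And>t. t \<in> T \<Longrightarrow> 0 \<le> t" unfolding T_def using theta_on_bounds_sin(1) by blast
  have "beta_angle f I K s s' \<Omega> = Inf T"
    using uv unfolding beta_angle_def T_def[symmetric] by (auto simp: Let_def)
  moreover have "bdd_below T" using T0 by (auto simp: bdd_below_def)
  ultimately show "0 \<le> beta_angle f I K s s' \<Omega>" "beta_angle f I K s s' \<Omega> \<le> theta_on \<Omega> u v"
    using cInf_greatest[of T 0] cInf_lower[OF uv] T0 uv by auto
qed

lemma one_minus_cos_sq_mult_max_le:
  fixes a b p :: real
  assumes "a > 0" "b > 0"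
  shows "(1 - p^2 / (a * b)) * max a b \<le> a + b - 2 * p"
proof -
  have *: "(1 - p^2 / (a * b)) * max a b = a + b - 2 * p - (min a b - p)^2 / min a b"
    using assms by (cases "a \<le> b") (simp_all add: field_simps power2_eq_square)
  show ?thesis unfolding * using assms by simp
qed

lemma sin_beta_angle_sq_mult_max_le:
  assumes u: "u \<in> Fs_map f s ` cone_s f I K s" and v: "v \<in> Fs_map f s' ` cone_s f I K s'"
  shows "(sin (beta_angle f I K s s' \<Omega>))^2 * max (inner_on \<Omega> u u) (inner_on \<Omega> v v)
     \<le> (\<Sum>k\<in>\<Omega>. (u k - v k)^2)"
proof -
  let ?p = "inner_on \<Omega> u v" and ?a = "inner_on \<Omega> u u" and ?b = "inner_on \<Omega> v v"
  let ?B = "beta_angle f I K s s' \<Omega>"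
  have a0: "?a \<ge> 0" "?b \<ge> 0" by (simp_all add: inner_on_nonneg)
  have s1: "(sin ?B)^2 \<le> 1" by (simp add: abs_square_le_1)
  show ?thesis
  proof (cases "?a = 0 \<or> ?b = 0")
    case True
    then have "?p = 0" using inner_on_Cauchy_Schwarz[of \<Omega> u v] by auto
    have "(sin ?B)^2 * max ?a ?b \<le> 1 * max ?a ?b"
      using s1 a0 by (intro mult_right_mono) auto
    also have "\<dots> \<le> ?a + ?b - 2 * ?p" using True a0 \<open>?p = 0\<close> by auto
    finally show ?thesis by (simp add: sum_power2_diff_inner_on)
  next
    case False
    then have pos: "?a > 0" "?b > 0" using a0 by auto
    then have nz: "norm_on \<Omega> u \<noteq> 0" "norm_on \<Omega> v \<noteq> 0" by (auto simp: norm_on_def)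
    note B = beta_angle_bounds[OF u v nz] and th = theta_on_bounds_sin[OF nz]
    have "sin ?B \<le> sin (theta_on \<Omega> u v)" "0 \<le> sin ?B"
      using B th by (auto intro: sin_ge_zero simp: sin_mono_le_eq)
    then have "(sin ?B)^2 \<le> 1 - ?p^2 / (?a * ?b)"
      unfolding th(3)[symmetric] by (intro power_mono) auto
    then have "(sin ?B)^2 * max ?a ?b \<le> (1 - ?p^2 / (?a * ?b)) * max ?a ?b"
      using a0 by (intro mult_right_mono) auto
    also have "\<dots> \<le> ?a + ?b - 2 * ?p" using one_minus_cos_sq_mult_max_le pos by blast
    finally show ?thesis by (simp add: sum_power2_diff_inner_on)
  qed
qed

lemma Min_split_mult_le_sum_min:
  fixes c c' :: "'i set \<Rightarrow> real" and p q :: "'i \<Rightarrow> real"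
  assumes X: "finite X" and t: "0 \<le> t"
    and c: "\<And>\<Omega>. \<Omega> \<subseteq> X \<Longrightarrow> c \<Omega> * t \<le> (\<Sum>k\<in>\<Omega>. p k)"
    and c': "\<And>\<Omega>. \<Omega> \<subseteq> X \<Longrightarrow> c' \<Omega> * t \<le> (\<Sum>k\<in>\<Omega>. q k)"
  shows "Min ((\<lambda>\<Omega>. c \<Omega> + c' (X - \<Omega>)) ` Pow X) * t \<le> (\<Sum>k\<in>X. min (p k) (q k))"
proof -
  define \<Omega> where "\<Omega> = {k\<in>X. p k \<le> q k}"
  have "Min ((\<lambda>\<Omega>. c \<Omega> + c' (X - \<Omega>)) ` Pow X) * t \<le> (c \<Omega> + c' (X - \<Omega>)) * t"
    using X t by (intro mult_right_mono Min_le) (auto simp: \<Omega>_def)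
  also have "\<dots> \<le> (\<Sum>k\<in>\<Omega>. p k) + (\<Sum>k\<in>X - \<Omega>. q k)"
    using c[of \<Omega>] c'[of "X - \<Omega>"] by (simp add: \<Omega>_def distrib_right)
  also have "\<dots> = (\<Sum>k\<in>\<Omega>. min (p k) (q k)) + (\<Sum>k\<in>X - \<Omega>. min (p k) (q k))"
    by (intro arg_cong2[where f = "(+)"] sum.cong) (auto simp: \<Omega>_def)
  also have "\<dots> = (\<Sum>k\<in>X. min (p k) (q k))"
    using X by (metis (no_types, lifting) \<Omega>_def add.commute mem_Collect_eq subsetI sum.subset_diff)
  finally show ?thesis .
qed

lemma A_bound_nonneg: "0 \<le> A_bound f I K L s s'"
  unfolding A_bound_def Let_def
  by (intro real_sqrt_ge_zero add_nonneg_nonneg mult_nonneg_nonneg Min.boundedI)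
    (auto simp: Jset_def Jcset_def)

locale pool_partition =
  fixes K :: nat and I :: "nat \<Rightarrow> nat set" and L :: nat
  assumes pools_disjoint: "\<And>k k'. k \<in> {1..K} \<Longrightarrow> k' \<in> {1..K} \<Longrightarrow> k \<noteq> k' \<Longrightarrow> I k \<inter> I k' = {}"
    and finite_pool: "\<And>k. k \<in> {1..K} \<Longrightarrow> finite (I k)"
    and card_pool: "\<And>k. k \<in> {1..K} \<Longrightarrow> card (I k) = L"
begin

lemma Pinf_eq_abs_inner:
  assumes "k \<in> {1..K}" "x \<in> cone_s f I K s" "s k \<in> I k"
  shows "Pinf f I x k = \<bar>x \<bullet> f (s k)\<bar>"
  unfolding Pinf_def using assms finite_pool by (intro Max_eqI) (auto simp: cone_s_def)

lemma lambda_minus_pools_sq_mult_norm_le: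
  assumes \<Omega>: "\<Omega> \<subseteq> {1..K}" and x: "x \<in> cone_s f I K s"
  shows "(lambda_minus f (\<Union>k\<in>\<Omega>. I k))^2 * (norm x)^2 \<le> real L * (\<Sum>k\<in>\<Omega>. (x \<bullet> f (s k))^2)"
proof -
  have "(lambda_minus f (\<Union>k\<in>\<Omega>. I k))^2 * (norm x)^2 \<le> (\<Sum>j\<in>(\<Union>k\<in>\<Omega>. I k). (x \<bullet> f j)^2)"
    by (rule lambda_minus_sq_mult_norm_le)
  also have "\<dots> = (\<Sum>k\<in>\<Omega>. \<Sum>j\<in>I k. (x \<bullet> f j)^2)"
  proof (rule sum.UNION_disjoint)
    show "finite \<Omega>" using \<Omega> finite_subset by blast
    show "\<forall>k\<in>\<Omega>. finite (I k)" using \<Omega> finite_pool by blast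
    show "\<forall>k\<in>\<Omega>. \<forall>k'\<in>\<Omega>. k \<noteq> k' \<longrightarrow> I k \<inter> I k' = {}"
      using \<Omega> pools_disjoint by (meson subsetD)
  qed
  also have "\<dots> \<le> (\<Sum>k\<in>\<Omega>. real L * (x \<bullet> f (s k))^2)"
  proof (rule sum_mono)
    fix k assume "k \<in> \<Omega>"
    then have k: "k \<in> {1..K}" using \<Omega> by auto
    have "(\<Sum>j\<in>I k. (x \<bullet> f j)^2) \<le> of_nat (card (I k)) * (x \<bullet> f (s k))^2"
      using x k by (intro sum_bounded_above) (auto simp: cone_s_def abs_le_square_iff)
    then show "(\<Sum>j\<in>I k. (x \<bullet> f j)^2) \<le> real L * (x \<bullet> f (s k))^2" using card_pool k by simp
  qed
  finally show ?thesis by (simp add: sum_distrib_left)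
qed

lemma Lambda_ss_sq_mult_dpm_le:
  assumes \<Omega>: "\<Omega> \<subseteq> {1..K}" and x: "x \<in> cone_s f I K s" and y: "y \<in> cone_s f I K s'"
  shows "(Lambda_ss f I K s s' \<Omega>)^2 * ((dpm x y)^2 / (4 * real L))
         \<le> (\<Sum>k\<in>\<Omega>. (x \<bullet> f (s k) - y \<bullet> f (s' k))^2)"
proof (cases "L = 0")
  case True then show ?thesis by (simp add: sum_nonneg)
next
  case False
  then have L0: "real L > 0" by simp
  define lam where "lam = lambda_minus f (\<Union>k\<in>\<Omega>. I k)"
  define sg where "sg = (sin (beta_angle f I K s s' \<Omega>))^2"
  define A where "A = (\<Sum>k\<in>\<Omega>. (x \<bullet> f (s k))^2)"
  define B where "B = (\<Sum>k\<in>\<Omega>. (y \<bullet> f (s' k))^2)"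
  define m where "m = max (norm x) (norm y)"
  have sg0: "0 \<le> sg" by (simp add: sg_def)
  have "dpm x y \<le> 2 * m"
    using dpm_le_norm_diff[of x y] norm_triangle_ineq4[of x y] unfolding m_def by linarith
  then have d4: "(dpm x y)^2 \<le> 4 * m^2"
    using dpm_nonneg[of x y] power_mono[of "dpm x y" "2*m" 2] by (simp add: power_mult_distrib)
  have "lam^2 * m^2 \<le> real L * max A B"
    using lambda_minus_pools_sq_mult_norm_le[OF \<Omega> x] lambda_minus_pools_sq_mult_norm_le[OF \<Omega> y] L0
    unfolding m_def lam_def A_def B_def
    by (cases "norm x \<le> norm y") (auto simp: max_def intro: order_trans)
  have "(Lambda_ss f I K s s' \<Omega>)^2 * ((dpm x y)^2 / (4 * real L))
        = sg * (lam^2 * (dpm x y)^2) / (4 * real L)"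
    by (simp add: Lambda_ss_def lam_def sg_def power_mult_distrib)
  also have "\<dots> \<le> sg * (lam^2 * (4 * m^2)) / (4 * real L)"
    using d4 sg0 L0 by (intro divide_right_mono mult_left_mono) auto
  also have "\<dots> = sg * (lam^2 * m^2) / real L" using L0 by simp
  also have "\<dots> \<le> sg * (real L * max A B) / real L"
    using \<open>lam^2 * m^2 \<le> real L * max A B\<close> sg0 L0 by (intro divide_right_mono mult_left_mono) auto
  also have "\<dots> = sg * max A B" using L0 by simp
  also have "\<dots> \<le> (\<Sum>k\<in>\<Omega>. (x \<bullet> f (s k) - y \<bullet> f (s' k))^2)"
    using sin_beta_angle_sq_mult_max_le[of "Fs_map f s x" f s I K "Fs_map f s' y" s' \<Omega>] x y
    by (simp add: Fs_map_def sg_def A_def B_def inner_on_def power2_eq_square)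
  finally show ?thesis .
qed

lemma A_bound_mult_dpm_le:
  assumes x: "x \<in> cone_s f I K s" and y: "y \<in> cone_s f I K s'"
  shows "dpm x y * A_bound f I K L s s'
         \<le> sqrt (\<Sum>k\<in>{1..K}. (\<bar>x \<bullet> f (s k)\<bar> - \<bar>y \<bullet> f (s' k)\<bar>)^2)"
proof -
  define d where "d = dpm x y"
  define gap where "gap k = min ((x \<bullet> f (s k) - y \<bullet> f (s' k))^2) ((x \<bullet> f (s k) + y \<bullet> f (s' k))^2)" for k
  define J where "J = Jset K s s'"
  define Jc where "Jc = Jcset K s s'"
  define MJ where "MJ = Min ((\<lambda>\<Omega>. (lambda_minus (\<lambda>k. f (s k)) \<Omega>)^2
                        + (lambda_minus (\<lambda>k. f (s k)) (J - \<Omega>))^2) ` Pow J)"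
  define MJc where "MJc = Min ((\<lambda>\<Omega>. (Lambda_ss f I K s s' \<Omega>)^2
                        + (Lambda_ss f I K s s' (Jc - \<Omega>))^2) ` Pow Jc)"
  have J: "J \<subseteq> {1..K}" "finite J" by (auto simp: J_def Jset_def intro: finite_subset)
  have Jc: "Jc \<subseteq> {1..K}" "finite Jc" by (auto simp: Jc_def Jcset_def intro: finite_subset)
  have "MJ * d^2 \<le> (\<Sum>k\<in>J. gap k)"
    unfolding MJ_def gap_def d_def
  proof (rule Min_split_mult_le_sum_min[OF J(2)])
    fix \<Omega> assume "\<Omega> \<subseteq> J"
    then have "\<And>k. k \<in> \<Omega> \<Longrightarrow> s' k = s k" by (auto simp: J_def Jset_def)
    from lambda_minus_sq_mult_dpm_le[OF this, where x = x and y = y]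
      lambda_minus_sq_mult_dpm_le[OF this, where x = x and y = "-y"]
    show "(lambda_minus (\<lambda>k. f (s k)) \<Omega>)^2 * (dpm x y)^2 \<le> (\<Sum>k\<in>\<Omega>. (x \<bullet> f (s k) - y \<bullet> f (s' k))^2)"
      and "(lambda_minus (\<lambda>k. f (s k)) \<Omega>)^2 * (dpm x y)^2 \<le> (\<Sum>k\<in>\<Omega>. (x \<bullet> f (s k) + y \<bullet> f (s' k))^2)"
      by (simp_all add: dpm_minus_right)
  qed simp
  moreover have "MJc * (d^2 / (4 * real L)) \<le> (\<Sum>k\<in>Jc. gap k)"
    unfolding MJc_def gap_def
  proof (rule Min_split_mult_le_sum_min[OF Jc(2)])
    fix \<Omega> assume "\<Omega> \<subseteq> Jc"
    then have \<Omega>: "\<Omega> \<subseteq> {1..K}" using Jc by auto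
    show "(Lambda_ss f I K s s' \<Omega>)^2 * (d^2 / (4 * real L))
          \<le> (\<Sum>k\<in>\<Omega>. (x \<bullet> f (s k) - y \<bullet> f (s' k))^2)"
      using Lambda_ss_sq_mult_dpm_le[OF \<Omega> x y] by (simp add: d_def)
    show "(Lambda_ss f I K s s' \<Omega>)^2 * (d^2 / (4 * real L))
          \<le> (\<Sum>k\<in>\<Omega>. (x \<bullet> f (s k) + y \<bullet> f (s' k))^2)"
      using Lambda_ss_sq_mult_dpm_le[OF \<Omega> x cone_s_uminus[OF y]] by (simp add: d_def dpm_minus_right)
  qed simp
  moreover have "(\<Sum>k\<in>{1..K}. gap k) = (\<Sum>k\<in>J. gap k) + (\<Sum>k\<in>Jc. gap k)"
    using sum.subset_diff[OF J(1), of gap] by (simp add: J_def Jc_def Jcset_def)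
  ultimately have "(MJ + 1 / (4 * real L) * MJc) * d^2 \<le> (\<Sum>k\<in>{1..K}. gap k)"
    by (simp add: algebra_simps)
  moreover have A: "A_bound f I K L s s' = sqrt (MJ + 1 / (4 * real L) * MJc)"
    by (simp add: A_bound_def MJ_def MJc_def J_def Jc_def Let_def)
  ultimately have "(d * A_bound f I K L s s')^2 \<le> (\<Sum>k\<in>{1..K}. gap k)"
    using A_bound_nonneg[of f I K L s s'] by (simp add: power_mult_distrib mult.commute)
  then have "d * A_bound f I K L s s' \<le> sqrt (\<Sum>k\<in>{1..K}. gap k)"
    by (simp add: real_le_rsqrt)
  then show ?thesis by (simp add: d_def gap_def power2_abs_diff_abs)
qed

end

theorem proposition4:
  fixes f :: "nat \<Rightarrow> 'a::euclidean_space"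
    and I :: "nat \<Rightarrow> nat set"
    and M K L :: nat
    and sw :: "'a \<Rightarrow> nat \<Rightarrow> nat"
  assumes frame: "span (f ` {1..M}) = UNIV"
    and disj: "\<And>k k'. k \<in> {1..K} \<Longrightarrow> k' \<in> {1..K} \<Longrightarrow> k \<noteq> k' \<Longrightarrow> I k \<inter> I k' = {}"
    and cover: "(\<Union>k\<in>{1..K}. I k) = {1..M}"
    and size: "\<And>k. k \<in> {1..K} \<Longrightarrow> card (I k) = L"
    and sw_in: "\<And>x k. k \<in> {1..K} \<Longrightarrow> sw x k \<in> I k"
    and sw_max: "\<And>x k j. k \<in> {1..K} \<Longrightarrow> j \<in> I k \<Longrightarrow> \<bar>x \<bullet> f j\<bar> \<le> \<bar>x \<bullet> f (sw x k)\<bar>"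
  shows "\<forall>x x'. dpm x x' * (INF s\<in>range sw. INF s'\<in>range sw. A_bound f I K L s s')
                \<le> pool_dist f I K x x'"
proof (intro allI)
  fix x x' :: 'a
  interpret pool_partition K I L
  proof
    show "finite (I k)" if "k \<in> {1..K}" for k
      using that cover finite_subset[of "I k" "{1..M}"] by blast
  qed (use disj size in auto)
  have cone: "z \<in> cone_s f I K (sw z)" for z using sw_max by (auto simp: cone_s_def)
  have "(INF s\<in>range sw. INF s'\<in>range sw. A_bound f I K L s s') \<le> A_bound f I K L (sw x) (sw x')"
  proof (rule cINF_lower2)
    show "bdd_below ((\<lambda>s. INF s'\<in>range sw. A_bound f I K L s s') ` range sw)"
      by (rule bdd_belowI2[of _ 0], rule cINF_greatest) (simp_all add: A_bound_nonneg)
    show "(INF s'\<in>range sw. A_bound f I K L (sw x) s') \<le> A_bound f I K L (sw x) (sw x')"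
      by (rule cINF_lower) (auto intro: bdd_belowI2[of _ 0] A_bound_nonneg)
  qed simp
  then have "dpm x x' * (INF s\<in>range sw. INF s'\<in>range sw. A_bound f I K L s s')
      \<le> dpm x x' * A_bound f I K L (sw x) (sw x')"
    by (intro mult_left_mono dpm_nonneg)
  also have "\<dots> \<le> pool_dist f I K x x'"
    using A_bound_mult_dpm_le[OF cone cone] Pinf_eq_abs_inner[OF _ cone sw_in]
    by (simp add: pool_dist_def)
  finally show "dpm x x' * (INF s\<in>range sw. INF s'\<in>range sw. A_bound f I K L s s')
      \<le> pool_dist f I K x x'" .
qed

end
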